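(* Let $N\ge1$, let $\mathcal L\in\mathbb{R}^{N\times N}$ be the Laplacian of an undirected graph $\mathcal G$ on $N$ nodes, and let $\Delta\in\mathbb{R}^{N\times N}$ be a diagonal matrix with every diagonal entry in $\{0,1\}$. Then every nonzero eigenvalue of $\mathcal H=\mathcal L+\Delta$ is not less than $$\lambda_H:=\frac{4}{N(N^2-N+4)}>0.$$
   Context: The graph $\mathcal G$ has node set $\{1,\dots,N\}$ and adjacency entries $a_{ij}\in\{0,1\}$ with $a_{ij}=a_{ji}$ (undirected, no self-loops); its Laplacian $\mathcal L$ has $l_{ii}=\sum_{j=1}^Na_{ij}$ and $l_{ij}=-a_{ij}$ for $i\ne j$. *)

theory Defs
  imports "Jordan_Normal_Form.Char_Poly"
begin

text \<open>Graph Laplacian of the graph on nodes 0..N-1 (paper: 1..N) with adjacency entries a i j.\<close>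
definition laplacian :: "nat \<Rightarrow> (nat \<Rightarrow> nat \<Rightarrow> real) \<Rightarrow> real mat" where
  "laplacian N a = mat N N (\<lambda>(i,j). if i = j then (\<Sum>k<N. a i k) else - a i j)"

end

theory Submission
  imports Defs
begin

(* Let v be an eigenvector of L + \<Delta> for \<mu> \<noteq> 0 and restrict it to a connected component C on
   which it does not vanish; no edge leaves C, so the eigen-equation survives the restriction, and
   pairing it with v gives \<mu> |v|^2 = E + D, where E is the Dirichlet energy of v on C and
   D = sum of \<Delta>_ii v_i^2.  Cauchy-Schwarz along a simple path inside C gives
   (v_i - v_j)^2 \<le> (N - 1) E.  If C meets the support of \<Delta> at r, then v_r^2 \<le> D and every
   v_i^2 is at most N (v_r^2 + E).  Otherwise summing the eigen-equation over C shows that v sums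
   to zero there, so 2 |C| |v|^2 is the sum of all (v_i - v_j)^2.  Either way
   |v|^2 \<le> N (N^2 - N + 4) / 4 * (E + D). *)

lemma rtranclp_imp_distinct_path:
  assumes "R\<^sup>*\<^sup>* x y"
  shows "\<exists>p. p \<noteq> [] \<and> hd p = x \<and> last p = y \<and> distinct p \<and> successively R p
             \<and> set p \<subseteq> {z. R\<^sup>*\<^sup>* x z}"
  using assms
proof (induction rule: rtranclp_induct)
  case base
  show ?case by (intro exI[of _ "[x]"]) auto
next
  case (step y z)
  obtain p where p: "p \<noteq> []" "hd p = x" "last p = y" "distinct p" "successively R p"
    "set p \<subseteq> {z. R\<^sup>*\<^sup>* x z}"
    using step.IH by blast
  show ?case
  proof (cases "z \<in> set p")
    case True
    then obtain xs ys where p_split: "p = xs @ z # ys" by (meson split_list)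
    show ?thesis
    proof (intro exI[of _ "xs @ [z]"] conjI)
      show "hd (xs @ [z]) = x" using p(2) p_split by (cases xs) auto
      show "successively R (xs @ [z])"
        using p(5) p_split by (auto simp: successively_append_iff)
    qed (use p p_split in auto)
  next
    case False
    show ?thesis
    proof (intro exI[of _ "p @ [z]"] conjI)
      show "successively R (p @ [z])"
        using p step.hyps(2) by (auto simp: successively_append_iff)
    qed (use p False step.hyps in auto)
  qed
qed

fun path_energy :: "('a \<Rightarrow> real) \<Rightarrow> 'a list \<Rightarrow> real" where
  "path_energy x (u # w # p) = (x w - x u)\<^sup>2 + path_energy x (w # p)"
| "path_energy x _ = 0"

lemma path_energy_nonneg: "path_energy x p \<ge> 0"
  by (induction x p rule: path_energy.induct) auto

lemma square_add_le_weighted: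
  fixes d e k s :: real
  assumes "e\<^sup>2 \<le> k * s" "s \<ge> 0" "k \<ge> 0"
  shows "(d + e)\<^sup>2 \<le> (k + 1) * (d\<^sup>2 + s)"
proof (cases "k = 0")
  case True
  then show ?thesis using assms by simp
next
  case False
  then have "k > 0" using assms by simp
  have "k * (d + e)\<^sup>2 \<le> k * ((k + 1) * d\<^sup>2) + (k + 1) * e\<^sup>2"
    using zero_le_power2[of "k * d - e"] by (simp add: power2_eq_square algebra_simps)
  also have "\<dots> \<le> k * ((k + 1) * d\<^sup>2) + (k + 1) * (k * s)"
    using assms by (intro add_left_mono mult_left_mono) auto
  also have "\<dots> = k * ((k + 1) * (d\<^sup>2 + s))" by (simp add: algebra_simps)
  finally show ?thesis using \<open>k > 0\<close> by simp
qed

lemma square_diff_last_hd_le_path_energy: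
  "p \<noteq> [] \<Longrightarrow> (x (last p) - x (hd p))\<^sup>2 \<le> real (length p - 1) * path_energy x p"
proof (induction x p rule: path_energy.induct)
  case (1 x u w p)
  have "(x (last (u # w # p)) - x u)\<^sup>2 = ((x w - x u) + (x (last (w # p)) - x w))\<^sup>2" by simp
  also have "\<dots> \<le> (real (length p) + 1) * ((x w - x u)\<^sup>2 + path_energy x (w # p))"
    using 1 by (intro square_add_le_weighted path_energy_nonneg) auto
  finally show ?case by (simp add: add.commute)
qed auto

lemma path_energy_le_edge_sum:
  assumes "distinct p" "successively (\<lambda>u w. a u w = 1) p"
    and "\<And>u w. u \<in> set p \<Longrightarrow> w \<in> set p \<Longrightarrow> a u w \<ge> 0"
    and "\<And>u w. u \<in> set p \<Longrightarrow> w \<in> set p \<Longrightarrow> a u w = a w u"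
  shows "2 * path_energy x p \<le> (\<Sum>u\<in>set p. \<Sum>w\<in>set p. a u w * (x u - x w)\<^sup>2)"
  using assms
proof (induction x p rule: path_energy.induct)
  case (1 x u w p)
  let ?T = "set (w # p)"
  let ?g = "\<lambda>u w. a u w * (x u - x w)\<^sup>2"
  have "u \<notin> ?T" using 1 by simp
  have IH: "2 * path_energy x (w # p) \<le> (\<Sum>u\<in>?T. \<Sum>w\<in>?T. ?g u w)" using 1 by simp
  have "a u w = 1" using 1(3) by simp
  have "?g u w \<le> (\<Sum>w'\<in>?T. ?g u w')"
    by (rule member_le_sum) (use 1(4) in auto)
  moreover have "(\<Sum>w'\<in>?T. ?g w' u) = (\<Sum>w'\<in>?T. ?g u w')"
    by (rule sum.cong) (use 1(5) in \<open>auto simp: power2_commute\<close>)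
  moreover have "(\<Sum>u'\<in>insert u ?T. \<Sum>w'\<in>insert u ?T. ?g u' w')
      = ?g u u + (\<Sum>w'\<in>?T. ?g u w') + (\<Sum>u'\<in>?T. ?g u' u) + (\<Sum>u'\<in>?T. \<Sum>w'\<in>?T. ?g u' w')"
    using \<open>u \<notin> ?T\<close> by (simp add: sum.distrib algebra_simps del: set_simps)
  ultimately show ?case
    using IH \<open>a u w = 1\<close> by (simp add: power2_commute)
qed auto

definition dirichlet_energy :: "'a set \<Rightarrow> ('a \<Rightarrow> 'a \<Rightarrow> real) \<Rightarrow> ('a \<Rightarrow> real) \<Rightarrow> real" where
  "dirichlet_energy C a x = (\<Sum>i\<in>C. \<Sum>j\<in>C. a i j * (x i - x j)\<^sup>2) / 2"

lemma dirichlet_energy_nonneg: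
  "(\<And>i j. i \<in> C \<Longrightarrow> j \<in> C \<Longrightarrow> a i j \<ge> 0) \<Longrightarrow> dirichlet_energy C a x \<ge> 0"
  unfolding dirichlet_energy_def by (simp add: sum_nonneg)

lemma square_diff_le_dirichlet_energy:
  assumes "finite C" "set p \<subseteq> C" "p \<noteq> []" "distinct p" "successively (\<lambda>u w. a u w = 1) p"
    and "\<And>i j. i \<in> C \<Longrightarrow> j \<in> C \<Longrightarrow> a i j \<ge> 0"
    and "\<And>i j. i \<in> C \<Longrightarrow> j \<in> C \<Longrightarrow> a i j = a j i"
  shows "(x (last p) - x (hd p))\<^sup>2 \<le> (real (card C) - 1) * dirichlet_energy C a x"
proof -
  have "2 * path_energy x p \<le> (\<Sum>u\<in>set p. \<Sum>w\<in>set p. a u w * (x u - x w)\<^sup>2)"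
    using assms by (intro path_energy_le_edge_sum) blast+
  also have "\<dots> \<le> (\<Sum>u\<in>set p. \<Sum>w\<in>C. a u w * (x u - x w)\<^sup>2)"
    using assms by (intro sum_mono sum_mono2) auto
  also have "\<dots> \<le> (\<Sum>u\<in>C. \<Sum>w\<in>C. a u w * (x u - x w)\<^sup>2)"
    using assms by (intro sum_mono2 sum_nonneg) auto
  finally have "path_energy x p \<le> dirichlet_energy C a x"
    unfolding dirichlet_energy_def by simp
  have "length p \<le> card C"
    using assms by (metis card_mono distinct_card)
  then have "real (length p - 1) \<le> real (card C) - 1"
    using \<open>p \<noteq> []\<close> by (cases p) auto
  have "(x (last p) - x (hd p))\<^sup>2 \<le> real (length p - 1) * path_energy x p"
    using \<open>p \<noteq> []\<close> by (rule square_diff_last_hd_le_path_energy)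
  also have "\<dots> \<le> (real (card C) - 1) * dirichlet_energy C a x"
    using \<open>real (length p - 1) \<le> _\<close> \<open>path_energy x p \<le> _\<close> path_energy_nonneg
    by (intro mult_mono) auto
  finally show ?thesis .
qed

lemma sum_mult_laplacian_form:
  assumes "\<And>i j. i \<in> C \<Longrightarrow> j \<in> C \<Longrightarrow> a i j = a j i"
  shows "(\<Sum>i\<in>C. x i * (\<Sum>j\<in>C. a i j * (x i - x j))) = dirichlet_energy C a x"
proof -
  let ?A = "\<Sum>i\<in>C. \<Sum>j\<in>C. a i j * (x i * (x i - x j))"
  have "?A = (\<Sum>j\<in>C. \<Sum>i\<in>C. a i j * (x i * (x i - x j)))" by (rule sum.swap)
  also have "\<dots> = (\<Sum>i\<in>C. \<Sum>j\<in>C. a i j * (x j * (x j - x i)))"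
    using assms by (intro sum.cong refl) auto
  finally have swap: "?A = \<dots>" .
  have "(\<Sum>i\<in>C. \<Sum>j\<in>C. a i j * (x i - x j)\<^sup>2)
      = ?A + (\<Sum>i\<in>C. \<Sum>j\<in>C. a i j * (x j * (x j - x i)))"
    by (simp add: sum.distrib[symmetric] power2_eq_square algebra_simps)
  then have "(\<Sum>i\<in>C. \<Sum>j\<in>C. a i j * (x i - x j)\<^sup>2) = 2 * ?A"
    using swap by simp
  then show ?thesis
    unfolding dirichlet_energy_def by (simp add: sum_distrib_left algebra_simps)
qed

lemma sum_laplacian_form_eq_0:
  fixes x :: "'a \<Rightarrow> real"
  assumes "\<And>i j. i \<in> C \<Longrightarrow> j \<in> C \<Longrightarrow> a i j = a j i"
  shows "(\<Sum>i\<in>C. \<Sum>j\<in>C. a i j * (x i - x j)) = 0"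
proof -
  let ?A = "\<Sum>i\<in>C. \<Sum>j\<in>C. a i j * (x i - x j)"
  have "?A = (\<Sum>j\<in>C. \<Sum>i\<in>C. a i j * (x i - x j))" by (rule sum.swap)
  also have "\<dots> = (\<Sum>i\<in>C. \<Sum>j\<in>C. - (a i j * (x i - x j)))"
    using assms by (intro sum.cong refl) (auto simp: algebra_simps)
  also have "\<dots> = - ?A" by (simp add: sum_negf)
  finally show ?thesis by simp
qed

lemma sum_sum_square_diff:
  fixes x :: "'a \<Rightarrow> real"
  shows "(\<Sum>i\<in>C. \<Sum>j\<in>C. (x i - x j)\<^sup>2)
    = 2 * real (card C) * (\<Sum>i\<in>C. (x i)\<^sup>2) - 2 * (\<Sum>i\<in>C. x i)\<^sup>2"
  by (simp add: power2_eq_square algebra_simps sum.distrib sum_subtractf sum_distrib_left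
      sum_distrib_right)

lemma sum_squares_le_anchored:
  fixes x :: "'a \<Rightarrow> real"
  assumes "finite C" "r \<in> C" "k \<ge> 0" "e \<ge> 0"
    and "\<And>i. i \<in> C \<Longrightarrow> (x i - x r)\<^sup>2 \<le> k * e"
  shows "(\<Sum>i\<in>C. (x i)\<^sup>2) \<le> (1 + (real (card C) - 1) * (k + 1)) * ((x r)\<^sup>2 + e)"
proof -
  have card_eq: "real (card (C - {r})) = real (card C) - 1"
  proof -
    have "card C > 0" using assms(1,2) card_gt_0_iff by blast
    then show ?thesis using assms(1,2) by (simp add: of_nat_diff Suc_le_eq)
  qed
  have each: "(x i)\<^sup>2 \<le> (k + 1) * ((x r)\<^sup>2 + e)" if "i \<in> C" for i
    using square_add_le_weighted[of "x i - x r" k e "x r"] assms that by simp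
  have "(\<Sum>i\<in>C. (x i)\<^sup>2) = (x r)\<^sup>2 + (\<Sum>i\<in>C - {r}. (x i)\<^sup>2)"
    using assms by (simp add: sum.remove)
  also have "\<dots> \<le> ((x r)\<^sup>2 + e) + real (card (C - {r})) * ((k + 1) * ((x r)\<^sup>2 + e))"
    using assms each by (intro add_mono sum_bounded_above) auto
  also have "\<dots> = (1 + (real (card C) - 1) * (k + 1)) * ((x r)\<^sup>2 + e)"
    unfolding card_eq by (simp add: algebra_simps)
  finally show ?thesis .
qed

lemma sum_squares_le_of_sum_eq_0:
  fixes x :: "'a \<Rightarrow> real"
  assumes "finite C" "(\<Sum>i\<in>C. x i) = 0"
    and "\<And>i j. i \<in> C \<Longrightarrow> j \<in> C \<Longrightarrow> (x i - x j)\<^sup>2 \<le> b"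
  shows "2 * (\<Sum>i\<in>C. (x i)\<^sup>2) \<le> real (card C) * b"
proof (cases "C = {}")
  case False
  have "real (card C) * (2 * (\<Sum>i\<in>C. (x i)\<^sup>2)) = (\<Sum>i\<in>C. \<Sum>j\<in>C. (x i - x j)\<^sup>2)"
    using assms(2) by (simp add: sum_sum_square_diff)
  also have "\<dots> \<le> real (card C) * (real (card C) * b)"
    using assms(3) by (intro sum_bounded_above) auto
  finally show ?thesis
    using False assms(1) by (simp add: card_gt_0_iff)
qed simp

lemma eigen_equation_energy_identity:
  assumes "\<And>i j. i \<in> C \<Longrightarrow> j \<in> C \<Longrightarrow> a i j = a j i"
    and "\<And>i. i \<in> C \<Longrightarrow> \<mu> * x i = (\<Sum>j\<in>C. a i j * (x i - x j)) + \<delta> i * x i"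
  shows "\<mu> * (\<Sum>i\<in>C. (x i)\<^sup>2) = dirichlet_energy C a x + (\<Sum>i\<in>C. \<delta> i * (x i)\<^sup>2)"
proof -
  have "\<mu> * (\<Sum>i\<in>C. (x i)\<^sup>2) = (\<Sum>i\<in>C. x i * (\<mu> * x i))"
    by (simp add: sum_distrib_left power2_eq_square algebra_simps)
  also have "\<dots> = (\<Sum>i\<in>C. x i * (\<Sum>j\<in>C. a i j * (x i - x j)) + \<delta> i * (x i)\<^sup>2)"
    using assms(2) by (intro sum.cong refl) (simp add: algebra_simps power2_eq_square)
  also have "\<dots> = dirichlet_energy C a x + (\<Sum>i\<in>C. \<delta> i * (x i)\<^sup>2)"
    by (simp add: sum.distrib sum_mult_laplacian_form[OF assms(1)])
  finally show ?thesis .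
qed

lemma bound_denominator_pos:
  fixes n :: real
  assumes "n \<ge> 1"
  shows "n * (n ^ 2 - n + 4) > 0"
proof -
  have "n ^ 2 \<ge> n" using assms by (simp add: power2_eq_square)
  then show ?thesis using assms by simp
qed

lemma sum_squares_le_energy_anchored:
  fixes N :: nat and x :: "'a \<Rightarrow> real"
  assumes "finite C" "card C \<le> N" "r \<in> C" "e \<ge> 0" "(x r)\<^sup>2 \<le> d"
    and "\<And>i. i \<in> C \<Longrightarrow> (x i - x r)\<^sup>2 \<le> (real N - 1) * e"
  shows "(\<Sum>i\<in>C. (x i)\<^sup>2) \<le> real N * (real N ^ 2 - real N + 4) / 4 * (e + d)"
proof -
  have "real N \<ge> 1" using assms(1-3) card_gt_0_iff[of C] by fastforce
  have "(\<Sum>i\<in>C. (x i)\<^sup>2) \<le> (1 + (real (card C) - 1) * real N) * ((x r)\<^sup>2 + e)"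
    using sum_squares_le_anchored[OF assms(1,3), of "real N - 1" e x] assms(4,6) \<open>real N \<ge> 1\<close>
    by simp
  also have "\<dots> \<le> (1 + (real N - 1) * real N) * (e + d)"
    using assms(2,4,5) \<open>real N \<ge> 1\<close> by (intro mult_mono add_left_mono mult_right_mono) auto
  also have "\<dots> \<le> real N * (real N ^ 2 - real N + 4) / 4 * (e + d)"
  proof (rule mult_right_mono)
    \<comment> \<open>the difference of the two factors is (N - 1) (N - 2)^2 / 4\<close>
    have "0 \<le> (real N - 1) * (real N - 2)\<^sup>2" using \<open>real N \<ge> 1\<close> by simp
    then show "1 + (real N - 1) * real N \<le> real N * (real N ^ 2 - real N + 4) / 4"
      by (simp add: power2_eq_square algebra_simps)
  qed (use assms(4,5) zero_le_power2[of "x r"] in linarith)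
  finally show ?thesis .
qed

lemma sum_squares_le_energy_mean_zero:
  fixes N :: nat and x :: "'a \<Rightarrow> real"
  assumes "finite C" "card C \<le> N" "(\<Sum>i\<in>C. x i) = 0" "e \<ge> 0"
    and "\<And>i j. i \<in> C \<Longrightarrow> j \<in> C \<Longrightarrow> (x i - x j)\<^sup>2 \<le> (real N - 1) * e"
  shows "(\<Sum>i\<in>C. (x i)\<^sup>2) \<le> real N * (real N ^ 2 - real N + 4) / 4 * e"
proof -
  have "2 * (\<Sum>i\<in>C. (x i)\<^sup>2) \<le> real (card C) * ((real N - 1) * e)"
    using assms(1,3,5) by (rule sum_squares_le_of_sum_eq_0)
  also have "\<dots> \<le> (real N * (real N - 1)) * e"
    using assms(2,4) by (cases N) (auto intro: mult_right_mono simp: mult.assoc)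
  also have "\<dots> \<le> 2 * (real N * (real N ^ 2 - real N + 4) / 4) * e"
  proof (rule mult_right_mono)
    have "0 \<le> real N * ((real N - 2)\<^sup>2 + 2) + (real N)\<^sup>2" by simp
    then show "real N * (real N - 1) \<le> 2 * (real N * (real N ^ 2 - real N + 4) / 4)"
      by (simp add: power2_eq_square algebra_simps)
  qed (rule assms(4))
  finally show ?thesis by simp
qed

lemma sum_squares_le_energy:
  fixes N :: nat and x :: "'a \<Rightarrow> real"
  assumes "finite C" "card C \<le> N"
    and a_nonneg: "\<And>i j. i \<in> C \<Longrightarrow> j \<in> C \<Longrightarrow> a i j \<ge> 0"
    and a_sym: "\<And>i j. i \<in> C \<Longrightarrow> j \<in> C \<Longrightarrow> a i j = a j i"
    and diff: "\<And>i j. i \<in> C \<Longrightarrow> j \<in> C \<Longrightarrow> (x i - x j)\<^sup>2 \<le> (real N - 1) * dirichlet_energy C a x"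
    and \<delta>: "\<And>i. i \<in> C \<Longrightarrow> \<delta> i \<in> {0, 1}"
    and eigen: "\<And>i. i \<in> C \<Longrightarrow> \<mu> * x i = (\<Sum>j\<in>C. a i j * (x i - x j)) + \<delta> i * x i"
    and "\<mu> \<noteq> 0"
  shows "(\<Sum>i\<in>C. (x i)\<^sup>2) \<le> real N * (real N ^ 2 - real N + 4) / 4
           * (dirichlet_energy C a x + (\<Sum>i\<in>C. \<delta> i * (x i)\<^sup>2))"
proof -
  have "dirichlet_energy C a x \<ge> 0" using a_nonneg by (rule dirichlet_energy_nonneg)
  show ?thesis
  proof (cases "\<exists>r\<in>C. \<delta> r = 1")
    case True
    then obtain r where "r \<in> C" "\<delta> r = 1" by blast
    have "(x r)\<^sup>2 \<le> (\<Sum>i\<in>C. \<delta> i * (x i)\<^sup>2)"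
      using member_le_sum[OF \<open>r \<in> C\<close>, of "\<lambda>i. \<delta> i * (x i)\<^sup>2"] \<delta> \<open>\<delta> r = 1\<close> assms(1)
      by fastforce
    then show ?thesis
      using sum_squares_le_energy_anchored[OF assms(1,2) \<open>r \<in> C\<close> \<open>dirichlet_energy C a x \<ge> 0\<close>]
        diff \<open>r \<in> C\<close>
      by blast
  next
    case False
    then have \<delta>_zero: "\<delta> i = 0" if "i \<in> C" for i using \<delta> that by blast
    then have "\<mu> * (\<Sum>i\<in>C. x i) = (\<Sum>i\<in>C. \<Sum>j\<in>C. a i j * (x i - x j))"
      using eigen by (simp add: sum_distrib_left)
    then have "(\<Sum>i\<in>C. x i) = 0"
      using sum_laplacian_form_eq_0[of C a x, OF a_sym] \<open>\<mu> \<noteq> 0\<close> by simp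
    then show ?thesis
      using sum_squares_le_energy_mean_zero[OF assms(1,2) _ \<open>dirichlet_energy C a x \<ge> 0\<close> diff]
        \<delta>_zero
      by simp
  qed
qed

lemma eigenvalue_ge_on_component:
  fixes N :: nat and x :: "'a \<Rightarrow> real"
  assumes "finite C" "card C \<le> N" "i0 \<in> C" "x i0 \<noteq> 0"
    and "\<And>i j. i \<in> C \<Longrightarrow> j \<in> C \<Longrightarrow> a i j \<ge> 0"
    and a_sym: "\<And>i j. i \<in> C \<Longrightarrow> j \<in> C \<Longrightarrow> a i j = a j i"
    and "\<And>i j. i \<in> C \<Longrightarrow> j \<in> C \<Longrightarrow> (x i - x j)\<^sup>2 \<le> (real N - 1) * dirichlet_energy C a x"
    and "\<And>i. i \<in> C \<Longrightarrow> \<delta> i \<in> {0, 1}"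
    and eigen: "\<And>i. i \<in> C \<Longrightarrow> \<mu> * x i = (\<Sum>j\<in>C. a i j * (x i - x j)) + \<delta> i * x i"
    and "\<mu> \<noteq> 0"
  shows "\<mu> \<ge> 4 / (real N * (real N ^ 2 - real N + 4))"
proof -
  let ?D = "real N * (real N ^ 2 - real N + 4)"
  let ?S = "\<Sum>i\<in>C. (x i)\<^sup>2"
  have "?S \<le> ?D / 4 * (dirichlet_energy C a x + (\<Sum>i\<in>C. \<delta> i * (x i)\<^sup>2))"
    using assms(1,2,5-10) by (rule sum_squares_le_energy)
  also have "dirichlet_energy C a x + (\<Sum>i\<in>C. \<delta> i * (x i)\<^sup>2) = \<mu> * ?S"
    using eigen_equation_energy_identity[OF a_sym eigen] by simp
  finally have "4 * ?S \<le> (?D * \<mu>) * ?S" by (simp add: field_simps)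
  moreover have "?S > 0" using assms(1,3,4) by (intro sum_pos2) auto
  ultimately have "4 \<le> ?D * \<mu>" by (rule mult_right_le_imp_le)
  moreover have "?D > 0"
    using assms(1-3) bound_denominator_pos[of "real N"] card_gt_0_iff[of C] by fastforce
  ultimately show ?thesis by (simp add: divide_le_eq mult.commute)
qed

definition adjacent :: "nat \<Rightarrow> (nat \<Rightarrow> nat \<Rightarrow> real) \<Rightarrow> nat \<Rightarrow> nat \<Rightarrow> bool" where
  "adjacent N a i j \<longleftrightarrow> i < N \<and> j < N \<and> a i j = 1"

definition component :: "nat \<Rightarrow> (nat \<Rightarrow> nat \<Rightarrow> real) \<Rightarrow> nat \<Rightarrow> nat set" where
  "component N a i = {j. (adjacent N a)\<^sup>*\<^sup>* i j}"

lemma component_subset: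
  assumes "i < N"
  shows "component N a i \<subseteq> {..<N}"
proof
  fix j assume "j \<in> component N a i"
  then have "(adjacent N a)\<^sup>*\<^sup>* i j" by (simp add: component_def)
  then show "j \<in> {..<N}"
    using assms by (induction rule: rtranclp_induct) (auto simp: adjacent_def)
qed

lemma weight_eq_0_outside_component:
  assumes "i \<in> component N a i0" "j \<notin> component N a i0" "i < N" "j < N" "a i j \<in> {0, 1}"
  shows "a i j = 0"
  using assms rtranclp.rtrancl_into_rtrancl[of "adjacent N a" i0 i j]
  by (auto simp: component_def adjacent_def)

lemma component_square_diff_le:
  assumes "i0 < N" "i \<in> component N a i0" "j \<in> component N a i0"
    and a_nonneg: "\<And>i j. i < N \<Longrightarrow> j < N \<Longrightarrow> a i j \<ge> 0"
    and a_sym: "\<And>i j. i < N \<Longrightarrow> j < N \<Longrightarrow> a i j = a j i"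
  shows "(x i - x j)\<^sup>2 \<le> (real N - 1) * dirichlet_energy (component N a i0) a x"
proof -
  define C where "C = component N a i0"
  have "C \<subseteq> {..<N}" using component_subset[OF \<open>i0 < N\<close>] C_def by blast
  then have "finite C" "card C \<le> N" using finite_subset card_mono[of "{..<N}" C] by auto
  have "symp (adjacent N a)" using a_sym by (auto simp: symp_def adjacent_def)
  then have "(adjacent N a)\<^sup>*\<^sup>* j i0"
    using assms(3) by (auto intro: sympD[OF symp_rtranclp] simp: component_def)
  then have reach_ji: "(adjacent N a)\<^sup>*\<^sup>* j i"
    using assms(2) by (auto simp: component_def)
  obtain p where p: "p \<noteq> []" "hd p = j" "last p = i" "distinct p"
    "successively (adjacent N a) p" "set p \<subseteq> {z. (adjacent N a)\<^sup>*\<^sup>* j z}"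
    using rtranclp_imp_distinct_path[OF reach_ji] by blast
  have "set p \<subseteq> C"
    using p(6) assms(3) by (auto intro: rtranclp_trans simp: C_def component_def)
  moreover have "successively (\<lambda>u w. a u w = 1) p"
    using p(5) by (rule successively_mono) (simp add: adjacent_def)
  moreover have C_nonneg: "a u w \<ge> 0" and "a u w = a w u" if "u \<in> C" "w \<in> C" for u w
  proof -
    have "u < N" "w < N" using that \<open>C \<subseteq> {..<N}\<close> by auto
    then show "a u w \<ge> 0" "a u w = a w u" using a_nonneg a_sym by auto
  qed
  ultimately have "(x i - x j)\<^sup>2 \<le> (real (card C) - 1) * dirichlet_energy C a x"
    using square_diff_le_dirichlet_energy[OF \<open>finite C\<close>, of p a x] p by simp
  also have "\<dots> \<le> (real N - 1) * dirichlet_energy C a x"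
    using \<open>card C \<le> N\<close> C_nonneg by (intro mult_right_mono dirichlet_energy_nonneg) auto
  finally show ?thesis unfolding C_def .
qed

lemma laplacian_add_diagonal_mult_vec:
  assumes "\<Delta> \<in> carrier_mat N N" "diagonal_mat \<Delta>" "v \<in> carrier_vec N"
    and "\<And>i. i < N \<Longrightarrow> a i i = 0" "i < N"
  shows "((laplacian N a + \<Delta>) *\<^sub>v v) $ i = (\<Sum>j<N. a i j * (v $ i - v $ j)) + \<Delta> $$ (i, i) * v $ i"
proof -
  have "laplacian N a \<in> carrier_mat N N" by (simp add: laplacian_def)
  then have "((laplacian N a + \<Delta>) *\<^sub>v v) $ i = (\<Sum>j<N. (laplacian N a + \<Delta>) $$ (i, j) * v $ j)"
    using assms by (simp add: scalar_prod_def lessThan_atLeast0)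
  also have "\<dots> = (\<Sum>j<N. (if j = i then ((\<Sum>k<N. a i k) + \<Delta> $$ (i, i)) * v $ j else 0) - a i j * v $ j)"
  proof (rule sum.cong)
    fix j assume "j \<in> {..<N}"
    then have "\<Delta> $$ (i, j) = (if j = i then \<Delta> $$ (i, i) else 0)"
      using assms(1,2,5) unfolding diagonal_mat_def by auto
    then show "(laplacian N a + \<Delta>) $$ (i, j) * v $ j
        = (if j = i then ((\<Sum>k<N. a i k) + \<Delta> $$ (i, i)) * v $ j else 0) - a i j * v $ j"
      using assms \<open>j \<in> {..<N}\<close> by (auto simp: laplacian_def algebra_simps)
  qed simp
  also have "\<dots> = ((\<Sum>k<N. a i k) + \<Delta> $$ (i, i)) * v $ i - (\<Sum>j<N. a i j * v $ j)"
    using assms(5) by (simp add: sum_subtractf sum.delta)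
  also have "\<dots> = (\<Sum>j<N. a i j * (v $ i - v $ j)) + \<Delta> $$ (i, i) * v $ i"
    by (simp add: algebra_simps sum_subtractf sum_distrib_right sum_distrib_left)
  finally show ?thesis .
qed

lemma component_eigen_equation:
  assumes "\<Delta> \<in> carrier_mat N N" "diagonal_mat \<Delta>" "v \<in> carrier_vec N"
    and "\<And>i. i < N \<Longrightarrow> a i i = 0"
    and "(laplacian N a + \<Delta>) *\<^sub>v v = \<mu> \<cdot>\<^sub>v v"
    and "C \<subseteq> {..<N}" "i \<in> C" "\<And>j. j < N \<Longrightarrow> j \<notin> C \<Longrightarrow> a i j = 0"
  shows "\<mu> * v $ i = (\<Sum>j\<in>C. a i j * (v $ i - v $ j)) + \<Delta> $$ (i, i) * v $ i"
proof -
  have "i < N" using assms(6,7) by auto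
  then have "\<mu> * v $ i = ((laplacian N a + \<Delta>) *\<^sub>v v) $ i"
    using assms(3,5) by simp
  also have "\<dots> = (\<Sum>j<N. a i j * (v $ i - v $ j)) + \<Delta> $$ (i, i) * v $ i"
    by (rule laplacian_add_diagonal_mult_vec) (use assms \<open>i < N\<close> in auto)
  also have "(\<Sum>j<N. a i j * (v $ i - v $ j)) = (\<Sum>j\<in>C. a i j * (v $ i - v $ j))"
    using assms(6,8) by (intro sum.mono_neutral_right) auto
  finally show ?thesis .
qed

lemma laplacian_add_diagonal_eigenvalue_ge:
  assumes a01: "\<And>i j. i < N \<Longrightarrow> j < N \<Longrightarrow> a i j \<in> {0, 1}"
    and a_sym: "\<And>i j. i < N \<Longrightarrow> j < N \<Longrightarrow> a i j = a j i"
    and "\<And>i. i < N \<Longrightarrow> a i i = 0"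
    and "\<Delta> \<in> carrier_mat N N" "diagonal_mat \<Delta>" and \<Delta>01: "\<And>i. i < N \<Longrightarrow> \<Delta> $$ (i, i) \<in> {0, 1}"
    and "v \<in> carrier_vec N" "(laplacian N a + \<Delta>) *\<^sub>v v = \<mu> \<cdot>\<^sub>v v" "\<mu> \<noteq> 0"
    and "i0 < N" "v $ i0 \<noteq> 0"
  shows "\<mu> \<ge> 4 / (real N * (real N ^ 2 - real N + 4))"
proof -
  define C where "C = component N a i0"
  have "C \<subseteq> {..<N}" using component_subset[OF \<open>i0 < N\<close>] C_def by blast
  then have "finite C" "card C \<le> N" using finite_subset card_mono[of "{..<N}" C] by auto
  have "i0 \<in> C" by (simp add: C_def component_def)
  have a_nonneg: "a i j \<ge> 0" if "i < N" "j < N" for i j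
    using a01[OF that] by auto
  have C_nonneg: "a i j \<ge> 0" and C_sym: "a i j = a j i" if "i \<in> C" "j \<in> C" for i j
  proof -
    have "i < N" "j < N" using that \<open>C \<subseteq> {..<N}\<close> by auto
    then show "a i j \<ge> 0" "a i j = a j i" using a_nonneg a_sym by auto
  qed
  have C_diagonal: "\<Delta> $$ (i, i) \<in> {0, 1}" if "i \<in> C" for i
    using that \<Delta>01 \<open>C \<subseteq> {..<N}\<close> by auto
  have eigen: "\<mu> * v $ i = (\<Sum>j\<in>C. a i j * (v $ i - v $ j)) + \<Delta> $$ (i, i) * v $ i"
    if "i \<in> C" for i
  proof (rule component_eigen_equation[where a = a, OF assms(4,5,7,3,8) \<open>C \<subseteq> {..<N}\<close> that])
    show "a i j = 0" if "j < N" "j \<notin> C" for j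
      using weight_eq_0_outside_component a01 \<open>i \<in> C\<close> \<open>C \<subseteq> {..<N}\<close> that C_def by blast
  qed
  have diff: "(v $ i - v $ j)\<^sup>2 \<le> (real N - 1) * dirichlet_energy C a (\<lambda>k. v $ k)"
    if "i \<in> C" "j \<in> C" for i j
    using component_square_diff_le[OF \<open>i0 < N\<close> that[unfolded C_def] a_nonneg a_sym] C_def by simp
  show ?thesis
    by (rule eigenvalue_ge_on_component[where x = "\<lambda>k. v $ k" and \<delta> = "\<lambda>i. \<Delta> $$ (i, i)",
          OF \<open>finite C\<close> \<open>card C \<le> N\<close> \<open>i0 \<in> C\<close> \<open>v $ i0 \<noteq> 0\<close> C_nonneg C_sym diff C_diagonal
          eigen \<open>\<mu> \<noteq> 0\<close>])
qed

theorem lemma3: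
  fixes N :: nat and a :: "nat \<Rightarrow> nat \<Rightarrow> real" and \<Delta> :: "real mat" and \<mu> :: real
  assumes "N \<ge> 1"
    and "\<And>i j. i < N \<Longrightarrow> j < N \<Longrightarrow> a i j \<in> {0, 1}"
    and "\<And>i j. i < N \<Longrightarrow> j < N \<Longrightarrow> a i j = a j i"
    and "\<And>i. i < N \<Longrightarrow> a i i = 0"
    and "\<Delta> \<in> carrier_mat N N" and "diagonal_mat \<Delta>"
    and "\<And>i. i < N \<Longrightarrow> \<Delta> $$ (i, i) \<in> {0, 1}"
    and "eigenvalue (laplacian N a + \<Delta>) \<mu>" and "\<mu> \<noteq> 0"
  shows "4 / (real N * (real N ^ 2 - real N + 4)) > 0
         \<and> \<mu> \<ge> 4 / (real N * (real N ^ 2 - real N + 4))"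
proof
  show "4 / (real N * (real N ^ 2 - real N + 4)) > 0"
    using bound_denominator_pos[of "real N"] assms(1) by simp
  obtain v where v: "v \<in> carrier_vec N" "v \<noteq> 0\<^sub>v N" "(laplacian N a + \<Delta>) *\<^sub>v v = \<mu> \<cdot>\<^sub>v v"
    using assms(5,8) unfolding eigenvalue_def eigenvector_def by auto
  then obtain i0 where "i0 < N" "v $ i0 \<noteq> 0" by (metis eq_vecI index_zero_vec carrier_vecD)
  show "\<mu> \<ge> 4 / (real N * (real N ^ 2 - real N + 4))"
    using laplacian_add_diagonal_eigenvalue_ge[OF assms(2-7) v(1,3) assms(9) \<open>i0 < N\<close> \<open>v $ i0 \<noteq> 0\<close>] .
qed

end
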